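(* Let $1<d\le n$ be integers, let $C$ be a real symmetric $n\times n$ matrix with unit diagonal, and let $T_{n,d}=\{Y\in\mathbb{R}^{n\times d}: \|Y_i\|_2=1 \text{ for every row } Y_i\}$. For $Y\in T_{n,d}$ set $\psi=YY^T-C$ and $F_Y=2\psi Y$. Suppose $Y\in T_{n,d}$ satisfies \[ F_Y-\operatorname{diag}(F_YY^T)\,Y=0. \] Define the diagonal matrix $\lambda=\tfrac12\operatorname{diag}(F_YY^T)$ and $C(\lambda)=C+\lambda$. Then there exist an orthogonal matrix $Q$ and a diagonal matrix $D$ with \[ C(\lambda)=QDQ^T,\qquad YY^T=QD^*Q^T, \] where $D^*$ is a diagonal matrix obtained from $D$ by selecting at most $d$ nonnegative diagonal entries of $D$ (each selected entry keeping its position) and setting all other entries to zero.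
   Context: For a square matrix $A$, $\operatorname{diag}(A)$ denotes the diagonal matrix with the same diagonal as $A$, i.e. $\operatorname{diag}(A)_{ij}=\delta_{ij}A_{ij}$. The quantity $F_Y-\operatorname{diag}(F_YY^T)Y$ is the gradient on $T_{n,d}$ (with the Frobenius metric) of $F(Y)=\tfrac12\|YY^T-C\|_F^2$, whose Euclidean differential is $F_Y$. *)

theory Defs
  imports "HOL-Analysis.Analysis"
begin

definition diag_part :: "real^'n^'n \<Rightarrow> real^'n^'n" where
  "diag_part A = (\<chi> i j. if i = j then A $ i $ j else 0)"

definition is_diagonal :: "real^'n^'n \<Rightarrow> bool" where
  "is_diagonal A \<longleftrightarrow> (\<forall>i j. i \<noteq> j \<longrightarrow> A $ i $ j = 0)"

definition T_nd :: "(real^'d^'n) set" where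
  "T_nd = {Y. \<forall>i. norm (Y $ i) = 1}"

end

theory Submission
  imports Defs
begin

(* Write X = Y Y^T and C(lam) = C + lam. The stationarity condition says (X - C) Y = lam Y, and
   multiplying on the right by Y^T gives X^2 = C(lam) X. Both matrices are symmetric, so
   transposing this identity shows that they commute, and hence they are diagonalised by one
   orthogonal matrix Q. For a column q of Q with X q = e q and C(lam) q = mu q, the identity
   X^2 = C(lam) X gives e^2 = mu e, so e is either 0 or mu. Also e >= 0 because X is a Gram matrix,
   and at most rank X <= d of these e are nonzero. The simultaneous diagonalisation is proved
   directly: a maximiser of the Rayleigh quotient on an invariant subspace is an eigenvector, and
   then one inducts on the dimension of the subspace. *)

lemma linear_coeff_nonpos_if_quadratic_nonpos:
  fixes a b :: real
  assumes "\<And>t. 2 * t * a + t\<^sup>2 * b \<le> 0"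
  shows "a \<le> 0"
proof (rule ccontr)
  assume "\<not> a \<le> 0"
  then have a: "a > 0" by simp
  define t where "t = a / (\<bar>b\<bar> + 1)"
  have t: "t > 0" using a by (simp add: t_def)
  have "t * (\<bar>b\<bar> + 1) = a" unfolding t_def by simp
  then have "t * \<bar>b\<bar> < a" using t by (simp add: algebra_simps)
  then have "t * t * \<bar>b\<bar> < t * a" using mult_strict_left_mono t by (simp add: mult.assoc)
  moreover have "t * t * (- \<bar>b\<bar>) \<le> t * t * b" by (rule mult_left_mono) auto
  moreover have "t * a > 0" using t a by simp
  ultimately have "2 * t * a + t\<^sup>2 * b > 0" by (simp add: power2_eq_square)
  with assms[of t] show False by simp
qed

lemma symmetric_matrix_inner:
  fixes A :: "real^'n^'n"
  assumes "transpose A = A"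
  shows "inner v (A *v w) = inner (A *v v) w"
  by (metis assms dot_lmul_matrix transpose_matrix_vector)

lemma symmetric_quadratic_form_expand:
  fixes A :: "real^'n^'n"
  assumes "transpose A = A"
  shows "inner (v + t *\<^sub>R u) (A *v (v + t *\<^sub>R u))
           = inner v (A *v v) + 2 * t * inner u (A *v v) + t\<^sup>2 * inner u (A *v u)"
  using symmetric_matrix_inner[OF assms, of v u]
  by (simp add: matrix_vector_right_distrib matrix_vector_mult_scaleR inner_add
      inner_commute power2_eq_square algebra_simps)

lemma symmetric_rayleigh_maximizer_is_eigenvector:
  fixes A :: "real^'n^'n"
  assumes sym: "transpose A = A" and W: "subspace W" and inv: "\<forall>w\<in>W. A *v w \<in> W"
    and v: "v \<in> W" "inner v v = 1"
    and max: "\<forall>y\<in>W. inner y (A *v y) \<le> inner v (A *v v) * inner y y"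
  shows "A *v v = inner v (A *v v) *\<^sub>R v"
proof -
  define \<mu> where "\<mu> = inner v (A *v v)"
  define r where "r = A *v v - \<mu> *\<^sub>R v"
  have "r \<in> W" using inv v W by (simp add: r_def subspace_diff subspace_scale)
  have rv: "inner r v = 0"
    using v(2) by (simp add: r_def inner_diff_left) (simp add: \<mu>_def inner_commute)
  txt \<open>Moving from v towards the residual r cannot increase the Rayleigh quotient. Since r is
    orthogonal to v, this forces the inequality |r|^2 = <r, A v> <= 0.\<close>
  have "inner r (A *v v) \<le> 0"
  proof (rule linear_coeff_nonpos_if_quadratic_nonpos[where b = "inner r (A *v r) - \<mu> * inner r r"])
    fix t :: real
    have "v + t *\<^sub>R r \<in> W" using v \<open>r \<in> W\<close> W by (simp add: subspace_add subspace_scale)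
    then have le: "inner (v + t *\<^sub>R r) (A *v (v + t *\<^sub>R r)) \<le> \<mu> * inner (v + t *\<^sub>R r) (v + t *\<^sub>R r)"
      using max by (simp add: \<mu>_def)
    have norm_sq: "inner (v + t *\<^sub>R r) (v + t *\<^sub>R r) = 1 + t\<^sup>2 * inner r r"
      using rv v by (simp add: inner_add inner_commute power2_eq_square algebra_simps)
    show "2 * t * inner r (A *v v) + t\<^sup>2 * (inner r (A *v r) - \<mu> * inner r r) \<le> 0"
      using le unfolding symmetric_quadratic_form_expand[OF sym] norm_sq
      by (simp add: \<mu>_def algebra_simps)
  qed
  moreover have "inner r (A *v v) = inner r r"
    using rv by (simp add: r_def inner_diff_right)
  ultimately have "r = 0" by (metis inner_ge_zero inner_eq_zero_iff order_antisym)
  then show ?thesis by (simp add: r_def \<mu>_def)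
qed

lemma symmetric_invariant_subspace_has_eigenvector:
  fixes A :: "real^'n^'n"
  assumes sym: "transpose A = A" and W: "subspace W" "W \<noteq> {0}" and inv: "\<forall>w\<in>W. A *v w \<in> W"
  obtains v \<mu> where "v \<in> W" "norm v = 1" "A *v v = \<mu> *\<^sub>R v"
proof -
  let ?K = "W \<inter> sphere 0 1"
  let ?q = "\<lambda>x. inner x (A *v x)"
  have unit: "y /\<^sub>R norm y \<in> ?K" if "y \<in> W" "y \<noteq> 0" for y
    using that W(1) by (simp add: subspace_scale)
  have "compact ?K"
    by (rule closed_Int_compact) (auto simp: closed_subspace W(1))
  moreover have "?K \<noteq> {}" using W subspace_0 unit by blast
  moreover have "continuous_on ?K ?q" by (intro continuous_intros)
  ultimately obtain v where v: "v \<in> ?K" and vmax: "\<forall>y\<in>?K. ?q y \<le> ?q v"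
    using continuous_attains_sup by blast
  have "?q y \<le> ?q v * inner y y" if "y \<in> W" for y
  proof (cases "y = 0")
    case False
    have "?q (y /\<^sub>R norm y) = ?q y / (norm y)\<^sup>2"
      by (simp add: matrix_vector_mult_scaleR power2_eq_square field_simps)
    moreover have "?q (y /\<^sub>R norm y) \<le> ?q v" using vmax unit[OF that False] by blast
    ultimately have "?q y \<le> ?q v * (norm y)\<^sup>2"
      using False by (simp add: divide_le_eq)
    then show ?thesis by (simp add: power2_norm_eq_inner)
  qed simp
  moreover have "inner v v = 1" using v by (simp add: power2_norm_eq_inner[symmetric])
  ultimately have "A *v v = ?q v *\<^sub>R v"
    using v by (intro symmetric_rayleigh_maximizer_is_eigenvector[OF sym W(1) inv]) auto
  with v that show ?thesis by auto
qed

lemma commuting_symmetric_common_eigenvector: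
  fixes M X :: "real^'n^'n"
  assumes symM: "transpose M = M" and symX: "transpose X = X" and comm: "M ** X = X ** M"
    and V: "subspace V" "V \<noteq> {0}" and invM: "\<forall>w\<in>V. M *v w \<in> V" and invX: "\<forall>w\<in>V. X *v w \<in> V"
  obtains u \<mu> e where "u \<in> V" "norm u = 1" "M *v u = \<mu> *\<^sub>R u" "X *v u = e *\<^sub>R u"
proof -
  obtain v \<mu> where v: "v \<in> V" "norm v = 1" "M *v v = \<mu> *\<^sub>R v"
    using symmetric_invariant_subspace_has_eigenvector[OF symM V invM] .
  define W where "W = {w\<in>V. M *v w = \<mu> *\<^sub>R w}"
  have "subspace {w. M *v w = \<mu> *\<^sub>R w}"
    by (auto simp: subspace_def matrix_vector_right_distrib matrix_vector_mult_scaleR scaleR_add_right)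
  then have subW: "subspace W"
    using subspace_inter[OF V(1)] by (force simp: W_def Int_def)
  have "v \<in> W" "v \<noteq> 0" using v by (auto simp: W_def)
  then have nzW: "W \<noteq> {0}" by blast
  have invW: "\<forall>w\<in>W. X *v w \<in> W"
  proof
    fix w assume w: "w \<in> W"
    have "M *v (X *v w) = X *v (M *v w)" by (simp add: matrix_vector_mul_assoc comm)
    also have "\<dots> = \<mu> *\<^sub>R (X *v w)" using w by (simp add: W_def matrix_vector_mult_scaleR)
    finally show "X *v w \<in> W" using w invX by (auto simp: W_def)
  qed
  obtain u e where u: "u \<in> W" "norm u = 1" "X *v u = e *\<^sub>R u"
    using symmetric_invariant_subspace_has_eigenvector[OF symX subW nzW invW] .
  from u(1) have "u \<in> V" "M *v u = \<mu> *\<^sub>R u" by (auto simp: W_def)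
  then show ?thesis using that u(2,3) by blast
qed

lemma symmetric_invariant_orthogonal_complement:
  fixes A :: "real^'n^'n"
  assumes "transpose A = A" and "\<forall>w\<in>V. A *v w \<in> V" and "A *v u = \<mu> *\<^sub>R u"
  shows "\<forall>w\<in>{w\<in>V. inner u w = 0}. A *v w \<in> {w\<in>V. inner u w = 0}"
proof
  fix w assume w: "w \<in> {w\<in>V. inner u w = 0}"
  have "inner u (A *v w) = inner (A *v u) w" by (rule symmetric_matrix_inner[OF assms(1)])
  with w assms(2,3) show "A *v w \<in> {w\<in>V. inner u w = 0}" by simp
qed

lemma dim_orthogonal_complement_less:
  fixes u :: "'a::euclidean_space"
  assumes "subspace V" and "u \<in> V" and "u \<noteq> 0"
  shows "dim {w\<in>V. inner u w = 0} < dim V"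
proof (rule dim_psubset)
  have "u \<notin> {w\<in>V. inner u w = 0}" using assms(3) by simp
  then have "{w\<in>V. inner u w = 0} \<subset> V" using assms(2) by blast
  moreover have "subspace {w\<in>V. inner u w = 0}"
    using assms(1) by (auto simp: subspace_def inner_add_right)
  ultimately show "span {w\<in>V. inner u w = 0} \<subset> span V"
    using assms(1) by (simp add: span_eq_iff[THEN iffD2])
qed

lemma span_insert_orthogonal_complement:
  fixes u :: "'a::euclidean_space"
  assumes V: "subspace V" and u: "u \<in> V" "inner u u = 1"
    and B: "{w\<in>V. inner u w = 0} \<subseteq> span B"
  shows "V \<subseteq> span (insert u B)"
proof
  fix w assume w: "w \<in> V"
  have "w - inner u w *\<^sub>R u \<in> {w\<in>V. inner u w = 0}"
    using w u V by (simp add: inner_diff_right subspace_diff subspace_scale)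
  then have "w - inner u w *\<^sub>R u \<in> span (insert u B)"
    using B span_mono[of B "insert u B"] by blast
  moreover have "inner u w *\<^sub>R u \<in> span (insert u B)" by (simp add: span_base span_mul)
  ultimately have "(w - inner u w *\<^sub>R u) + inner u w *\<^sub>R u \<in> span (insert u B)"
    by (rule span_add)
  then show "w \<in> span (insert u B)" by simp
qed

definition common_unit_eigenvector :: "real^'n^'n \<Rightarrow> real^'n^'n \<Rightarrow> real^'n \<Rightarrow> bool" where
  "common_unit_eigenvector M X b \<longleftrightarrow>
     norm b = 1 \<and> (\<exists>\<mu>. M *v b = \<mu> *\<^sub>R b) \<and> (\<exists>e. X *v b = e *\<^sub>R b)"

lemma commuting_symmetric_common_orthonormal_eigenbasis:
  fixes M X :: "real^'n^'n"
  assumes symM: "transpose M = M" and symX: "transpose X = X" and comm: "M ** X = X ** M"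
    and V: "subspace V" and invM: "\<forall>w\<in>V. M *v w \<in> V" and invX: "\<forall>w\<in>V. X *v w \<in> V"
  shows "\<exists>B\<subseteq>V. pairwise orthogonal B \<and> V \<subseteq> span B \<and> (\<forall>b\<in>B. common_unit_eigenvector M X b)"
  using V invM invX
proof (induction "dim V" arbitrary: V rule: less_induct)
  case less
  show ?case
  proof (cases "V = {0}")
    case True
    then show ?thesis by (intro exI[of _ "{}"]) auto
  next
    case False
    obtain u \<mu> e where u: "u \<in> V" "norm u = 1" "M *v u = \<mu> *\<^sub>R u" "X *v u = e *\<^sub>R u"
      using commuting_symmetric_common_eigenvector[OF symM symX comm less.prems(1) False less.prems(2,3)] .
    have uu: "inner u u = 1" using u(2) by (simp add: power2_norm_eq_inner[symmetric])
    let ?V' = "{w\<in>V. inner u w = 0}"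
    have "dim ?V' < dim V"
      using u less.prems(1) by (intro dim_orthogonal_complement_less) auto
    moreover have "subspace ?V'" using less.prems(1) by (auto simp: subspace_def inner_add_right)
    ultimately have "\<exists>B\<subseteq>?V'. pairwise orthogonal B \<and> ?V' \<subseteq> span B \<and> (\<forall>b\<in>B. common_unit_eigenvector M X b)"
      using symmetric_invariant_orthogonal_complement[OF symM less.prems(2) u(3)]
        symmetric_invariant_orthogonal_complement[OF symX less.prems(3) u(4)]
      by (rule less.hyps)
    then obtain B where B: "B \<subseteq> ?V'" "pairwise orthogonal B" "?V' \<subseteq> span B"
        "\<forall>b\<in>B. common_unit_eigenvector M X b"
      by blast
    have "\<forall>b\<in>B. orthogonal u b" using B(1) by (auto simp: orthogonal_def)
    then have "pairwise orthogonal (insert u B)"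
      using B(2) by (auto simp: pairwise_insert orthogonal_commute)
    moreover have "V \<subseteq> span (insert u B)"
      using span_insert_orthogonal_complement[OF less.prems(1) u(1) uu B(3)] .
    moreover have "insert u B \<subseteq> V" using B(1) u(1) by auto
    moreover have "common_unit_eigenvector M X u"
      unfolding common_unit_eigenvector_def using u(2-4) by (intro conjI exI)
    ultimately show ?thesis
      using B(4) by (intro exI[of _ "insert u B"]) simp
  qed
qed

lemma orthonormal_basis_columns:
  fixes B :: "(real^'n) set"
  assumes orth: "pairwise orthogonal B" and unit: "\<forall>b\<in>B. norm b = 1" and span: "UNIV \<subseteq> span B"
  obtains Q where "orthogonal_matrix Q" "\<And>j. column j Q \<in> B"
proof -
  have indep: "independent B" using orth unit by (intro pairwise_orthogonal_independent) auto
  have "card B = dim (UNIV :: (real^'n) set)"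
    using span indep by (intro basis_card_eq_dim) auto
  then have "card B = CARD('n)" by simp
  then obtain g where g: "bij_betw g (UNIV :: 'n set) B"
    by (metis bij_betw_iff_card card_UNIV_def finite independent_imp_finite[OF indep])
  define Q where "Q = (\<chi> i j. g j $ i)"
  have col: "column j Q = g j" for j by (simp add: Q_def column_def vec_eq_iff)
  have "g j \<in> B" for j using g by (auto simp: bij_betw_def)
  moreover have "g i \<noteq> g j" if "i \<noteq> j" for i j
    using g that by (auto simp: bij_betw_def inj_on_def)
  ultimately have "orthogonal_matrix Q"
    using orth unit by (auto simp: orthogonal_matrix_orthonormal_columns col pairwise_def)
  with \<open>\<And>j. g j \<in> B\<close> show ?thesis using that col by simp
qed

lemma commuting_symmetric_simultaneous_diagonalization:
  fixes M X :: "real^'n^'n"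
  assumes "transpose M = M" and "transpose X = X" and "M ** X = X ** M"
  obtains Q a b where "orthogonal_matrix Q"
    "\<And>j. M *v column j Q = a j *\<^sub>R column j Q" "\<And>j. X *v column j Q = b j *\<^sub>R column j Q"
proof -
  obtain B where B: "pairwise orthogonal B" "UNIV \<subseteq> span B" "\<forall>b\<in>B. common_unit_eigenvector M X b"
    using commuting_symmetric_common_orthonormal_eigenbasis[OF assms, of UNIV] by auto
  then obtain Q where Q: "orthogonal_matrix Q" "\<And>j. column j Q \<in> B"
    by (metis orthonormal_basis_columns common_unit_eigenvector_def)
  have "\<forall>j. \<exists>\<mu>. M *v column j Q = \<mu> *\<^sub>R column j Q" "\<forall>j. \<exists>e. X *v column j Q = e *\<^sub>R column j Q"
    using B(3) Q(2) unfolding common_unit_eigenvector_def by blast+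
  then obtain a b where "\<forall>j. M *v column j Q = a j *\<^sub>R column j Q" "\<forall>j. X *v column j Q = b j *\<^sub>R column j Q"
    by metis
  with Q(1) show ?thesis using that by blast
qed

definition diag_matrix :: "('n \<Rightarrow> real) \<Rightarrow> real^'n^'n" where
  "diag_matrix a = (\<chi> i j. if i = j then a i else 0)"

lemma orthogonal_eigencolumns_decomposition:
  fixes A :: "real^'n^'n"
  assumes Q: "orthogonal_matrix Q" and eig: "\<And>j. A *v column j Q = a j *\<^sub>R column j Q"
  shows "A = Q ** diag_matrix a ** transpose Q"
proof -
  have "(\<Sum>k\<in>UNIV. A $ i $ k * Q $ k $ j) = a j * Q $ i $ j" for i j
    using eig[of j] by (simp add: vec_eq_iff matrix_vector_mult_def column_def)
  then have "A ** Q = Q ** diag_matrix a"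
    by (simp add: vec_eq_iff matrix_matrix_mult_def diag_matrix_def if_distrib cong: if_cong)
  then have "A ** (Q ** transpose Q) = Q ** diag_matrix a ** transpose Q"
    by (simp add: matrix_mul_assoc)
  with Q show ?thesis by (simp add: orthogonal_matrix_def)
qed

lemma card_nonzero_eigencolumns_le_rank:
  fixes A :: "real^'n^'n"
  assumes Q: "orthogonal_matrix Q" and eig: "\<And>j. A *v column j Q = a j *\<^sub>R column j Q"
  shows "card {j. a j \<noteq> 0} \<le> rank A"
proof -
  let ?S = "{j. a j \<noteq> 0}"
  have unit: "norm (column j Q) = 1" and orth: "i \<noteq> j \<Longrightarrow> orthogonal (column i Q) (column j Q)"
    for i j using Q by (auto simp: orthogonal_matrix_orthonormal_columns)
  have inj: "inj (\<lambda>j. column j Q)"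
  proof (rule injI, rule ccontr)
    fix i j assume "column i Q = column j Q" "i \<noteq> j"
    then have "orthogonal (column i Q) (column i Q)" using orth by metis
    with unit[of i] show False by (simp add: orthogonal_self)
  qed
  have "independent ((\<lambda>j. column j Q) ` ?S)"
  proof (rule pairwise_orthogonal_independent)
    show "pairwise orthogonal ((\<lambda>j. column j Q) ` ?S)"
    proof (rule pairwiseI)
      fix x y assume "x \<in> (\<lambda>j. column j Q) ` ?S" "y \<in> (\<lambda>j. column j Q) ` ?S" "x \<noteq> y"
      then obtain i j where "x = column i Q" "y = column j Q" "i \<noteq> j" by blast
      then show "orthogonal x y" using orth by simp
    qed
    show "0 \<notin> (\<lambda>j. column j Q) ` ?S"
    proof
      assume "0 \<in> (\<lambda>j. column j Q) ` ?S"
      then obtain j where "column j Q = 0" by auto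
      with unit[of j] show False by simp
    qed
  qed
  moreover have "(\<lambda>j. column j Q) ` ?S \<subseteq> range (\<lambda>x. A *v x)"
  proof clarify
    fix j assume "a j \<noteq> 0"
    then have "column j Q = A *v ((1 / a j) *\<^sub>R column j Q)"
      by (simp add: matrix_vector_mult_scaleR eig)
    then show "column j Q \<in> range (\<lambda>x. A *v x)" by blast
  qed
  ultimately have "card ((\<lambda>j. column j Q) ` ?S) \<le> rank A"
    unfolding rank_dim_range by (intro independent_card_le_dim)
  then show ?thesis using inj by (simp add: card_image inj_on_subset)
qed

lemma gram_matrix_eigenvalue_nonneg:
  fixes Y :: "real^'d^'n"
  assumes "(Y ** transpose Y) *v v = e *\<^sub>R v" and "v \<noteq> 0"
  shows "e \<ge> 0"
proof -
  have "e * inner v v = inner v ((Y ** transpose Y) *v v)" using assms(1) by simp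
  also have "\<dots> = inner (transpose Y *v v) (transpose Y *v v)"
    by (simp add: matrix_vector_mul_assoc[symmetric] dot_lmul_matrix[symmetric])
  finally have "e * inner v v \<ge> 0" by simp
  moreover have "inner v v > 0" using assms(2) by simp
  ultimately show ?thesis by (simp add: zero_le_mult_iff)
qed

lemma common_eigenvalue_zero_or_equal:
  fixes M X :: "real^'n^'n"
  assumes "X ** X = M ** X" and "M *v v = d *\<^sub>R v" and "X *v v = e *\<^sub>R v" and "v \<noteq> 0"
  shows "e = 0 \<or> e = d"
proof -
  have "(e * e) *\<^sub>R v = (X ** X) *v v"
    using assms(3) by (simp add: matrix_vector_mul_assoc[symmetric] matrix_vector_mult_scaleR)
  also have "\<dots> = (e * d) *\<^sub>R v"
    using assms(1-3) by (simp add: matrix_vector_mul_assoc[symmetric] matrix_vector_mult_scaleR)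
  finally have "e * e = e * d" using assms(4) by simp
  then show ?thesis by auto
qed

lemma matrix_add_rdistrib: "(A + B) ** C = A ** C + B ** (C :: 'a::semiring_1^'p^'n)"
  by (simp add: matrix_matrix_mult_def vec_eq_iff distrib_right sum.distrib)

lemma matrix_diff_rdistrib: "(A - B) ** C = A ** C - B ** (C :: 'a::ring_1^'p^'n)"
  by (simp add: matrix_matrix_mult_def vec_eq_iff left_diff_distrib sum_subtractf)

lemma transpose_add: "transpose (A + B) = transpose A + transpose (B :: 'a::plus^'n^'m)"
  by (simp add: transpose_def vec_eq_iff)

lemma transpose_diag_part: "transpose (diag_part A) = diag_part A"
  by (simp add: diag_part_def transpose_def vec_eq_iff)

lemma diag_part_scaleR: "diag_part (c *\<^sub>R A) = c *\<^sub>R diag_part A"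
  by (simp add: diag_part_def vec_eq_iff)

lemma critical_point_gram_equation:
  fixes C :: "real^'n^'n" and Y :: "real^'d^'n"
  defines "X \<equiv> Y ** transpose Y"
  assumes "let F = 2 *\<^sub>R ((Y ** transpose Y - C) ** Y) in F - diag_part (F ** transpose Y) ** Y = 0"
  shows "X ** X = (C + diag_part ((X - C) ** X)) ** X"
proof -
  define L where "L = diag_part ((X - C) ** X)"
  have "2 *\<^sub>R ((X - C) ** Y) = diag_part (2 *\<^sub>R ((X - C) ** Y) ** transpose Y) ** Y"
    using assms(2) by (simp add: Let_def X_def)
  also have "\<dots> = 2 *\<^sub>R (L ** Y)"
    by (simp add: L_def X_def matrix_mul_assoc diag_part_scaleR scalar_matrix_assoc[symmetric])
  finally have "(X - C) ** Y = L ** Y" by simp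
  then have "(X - C) ** X = L ** X"
    by (metis X_def matrix_mul_assoc)
  then have "X ** X - C ** X = L ** X"
    by (simp add: matrix_diff_rdistrib)
  then show ?thesis
    by (simp add: L_def matrix_add_rdistrib algebra_simps)
qed

lemma gram_square_eq_selected_spectral_decomposition:
  fixes M :: "real^'n^'n" and Y :: "real^'d^'n"
  defines "X \<equiv> Y ** transpose Y"
  assumes symM: "transpose M = M" and XX: "X ** X = M ** X"
  shows "\<exists>Q D S. orthogonal_matrix Q \<and> is_diagonal D \<and>
           card S \<le> CARD('d) \<and> (\<forall>i\<in>S. D $ i $ i \<ge> 0) \<and>
           M = Q ** D ** transpose Q \<and>
           X = Q ** (\<chi> i j. if i = j \<and> i \<in> S then D $ i $ i else 0) ** transpose Q"
proof -
  have symX: "transpose X = X" by (simp add: X_def matrix_transpose_mul)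
  have "M ** X = X ** M" by (metis XX matrix_transpose_mul symM symX)
  then obtain Q d e where Q: "orthogonal_matrix Q"
    and Md: "\<And>j. M *v column j Q = d j *\<^sub>R column j Q" and Xe: "\<And>j. X *v column j Q = e j *\<^sub>R column j Q"
    using commuting_symmetric_simultaneous_diagonalization[OF symM symX] by blast
  have "column j Q \<noteq> 0" for j
    using Q unfolding orthogonal_matrix_orthonormal_columns by (metis norm_zero zero_neq_one)
  then have e_cases: "e j = 0 \<or> e j = d j" and e_nonneg: "e j \<ge> 0" for j
    using common_eigenvalue_zero_or_equal[OF XX Md Xe] gram_matrix_eigenvalue_nonneg Xe
    unfolding X_def by blast+
  define S where "S = {j. e j \<noteq> 0}"
  have "card S \<le> rank X"
    unfolding S_def by (rule card_nonzero_eigencolumns_le_rank[OF Q Xe])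
  also have "\<dots> \<le> CARD('d)"
    using rank_mul_le_left[of Y "transpose Y"] rank_bound[of Y] by (simp add: X_def)
  finally have "card S \<le> CARD('d)" .
  have d_eq: "d j = e j" if "j \<in> S" for j using that e_cases[of j] by (auto simp: S_def)
  then have "(\<chi> i j. if i = j \<and> i \<in> S then diag_matrix d $ i $ i else 0) = diag_matrix e"
    by (auto simp: vec_eq_iff diag_matrix_def S_def)
  moreover have "\<forall>i\<in>S. diag_matrix d $ i $ i \<ge> 0"
    using d_eq e_nonneg by (simp add: diag_matrix_def)
  moreover have "is_diagonal (diag_matrix d)" by (simp add: is_diagonal_def diag_matrix_def)
  ultimately show ?thesis
    using Q \<open>card S \<le> CARD('d)\<close> orthogonal_eigencolumns_decomposition[OF Q Md]
      orthogonal_eigencolumns_decomposition[OF Q Xe]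
    by (intro exI[of _ Q] exI[of _ "diag_matrix d"] exI[of _ S]) simp
qed

theorem lemma6p1:
  fixes C :: "real^'n^'n" and Y :: "real^'d^'n"
  assumes "1 < CARD('d)" and "CARD('d) \<le> CARD('n)"
    and "transpose C = C" and "\<forall>i. C $ i $ i = 1"
    and "Y \<in> T_nd"
    and "let F = 2 *\<^sub>R ((Y ** transpose Y - C) ** Y)
         in F - diag_part (F ** transpose Y) ** Y = 0"
  shows "let F = 2 *\<^sub>R ((Y ** transpose Y - C) ** Y);
             lam = (1/2) *\<^sub>R diag_part (F ** transpose Y)
         in \<exists>Q D S. orthogonal_matrix Q \<and> is_diagonal D \<and>
              card S \<le> CARD('d) \<and> (\<forall>i\<in>S. D $ i $ i \<ge> 0) \<and>
              C + lam = Q ** D ** transpose Q \<and>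
              Y ** transpose Y = Q ** (\<chi> i j. if i = j \<and> i \<in> S then D $ i $ i else 0) ** transpose Q"
proof -
  define X where "X = Y ** transpose Y"
  define M where "M = C + diag_part ((X - C) ** X)"
  have lam: "C + (1/2) *\<^sub>R diag_part (2 *\<^sub>R ((X - C) ** Y) ** transpose Y) = M"
    by (simp add: M_def X_def matrix_mul_assoc diag_part_scaleR scalar_matrix_assoc[symmetric])
  have "X ** X = M ** X"
    using critical_point_gram_equation[OF assms(6)] by (simp add: X_def M_def)
  moreover have "transpose M = M" using assms(3) by (simp add: M_def transpose_add transpose_diag_part)
  ultimately show ?thesis
    using gram_square_eq_selected_spectral_decomposition[of M Y]
    unfolding Let_def X_def[symmetric] lam by simp
qed

end
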